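(* Let $A$ be a finite nonempty set, $F\subseteq\mathrm{Op}(A)$ and $Q\subseteq\mathrm{gQuord}(A)$. Then (i) $\mathrm{gQuord}(A,F)=\mathrm{gQuord}(A,\mathrm{trl}(F))$; (ii) $\mathrm{Pol}\,Q=(\mathrm{End}\,Q)^{*}$; in particular $(\mathrm{End}\,Q)^{*}$ is a clone and $\mathrm{End}\,Q$ is u-closed.
   Context: $\mathrm{Op}(A)$ is the set of all operations on $A$ of positive finite arity. An operation preserves a relation $\rho\subseteq A^m$ if applying it componentwise to tuples of $\rho$ yields a tuple of $\rho$. $\mathrm{Pol}\,Q$ (resp. $\mathrm{End}\,Q$) is the set of all operations (resp. unary maps) preserving every relation in $Q$. A translation of an $n$-ary $f$ is a unary map $x\mapsto f(a_1,\dots,a_{i-1},x,a_{i+1},\dots,a_n)$ with fixed $a_j\in A$; $\mathrm{trl}(f)$ is the set of translations of $f$ ($\mathrm{trl}(f)=\{f\}$ for unary $f$), $\mathrm{trl}(F)=\bigcup_{f\in F}\mathrm{trl}(f)$, and $M^*:=\{f\in\mathrm{Op}(A)\mid\mathrm{trl}(f)\subseteq M\}$ for $M\subseteq A^A$. A relation $\rho\subseteq A^m$ is a generalized quasiorder if it is reflexive and transitive in the sense: for every $m\times m$-matrix over $A$ whose rows and columns all lie in $\rho$, its diagonal lies in $\rho$. $\mathrm{gQuord}(A)$ is the set of all generalized quasiorders on $A$, and $\mathrm{gQuord}(A,F)$ is the set of those preserved by all $f\in F$. For $M\subseteq A^A$, the u-closure $\overline{M}$ is the intersection of all monoids $N$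 with $M\subseteq N\le A^A$ such that $N^*$ is a clone; a monoid $M$ is u-closed if $\overline{M}=M$. *)

theory Defs
  imports "HOL-Library.FuncSet"
begin

(* An n-ary operation on A (n >= 1) is a pair (n, f) with f :: 'a list => 'a,
   mapping every list of length n over A into A, and extensional
   (value undefined on all other lists), so that equality of operations is
   equality of the mathematical functions. *)
type_synonym 'a operation = "nat \<times> ('a list \<Rightarrow> 'a)"

definition tuples :: "'a set \<Rightarrow> nat \<Rightarrow> 'a list set" where
  "tuples A n = {xs. length xs = n \<and> set xs \<subseteq> A}"

definition Op :: "'a set \<Rightarrow> 'a operation set" where
  "Op A = {(n, f). 0 < n \<and> (\<forall>xs \<in> tuples A n. f xs \<in> A)
                 \<and> (\<forall>xs. xs \<notin> tuples A n \<longrightarrow> f xs = undefined)}"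

abbreviation maps :: "'a set \<Rightarrow> ('a \<Rightarrow> 'a) set" where
  "maps A \<equiv> A \<rightarrow>\<^sub>E A"

type_synonym 'a relation = "nat \<times> 'a list set"

definition preserves :: "'a operation \<Rightarrow> 'a relation \<Rightarrow> bool" where
  "preserves F R = (case F of (n, f) \<Rightarrow> case R of (m, \<rho>) \<Rightarrow>
     (\<forall>rs. length rs = n \<and> set rs \<subseteq> \<rho> \<longrightarrow>
        map (\<lambda>i. f (map (\<lambda>r. r ! i) rs)) [0..<m] \<in> \<rho>))"

definition preserves_map :: "('a \<Rightarrow> 'a) \<Rightarrow> 'a relation \<Rightarrow> bool" where
  "preserves_map g R = (\<forall>r \<in> snd R. map g r \<in> snd R)"

definition Pol :: "'a set \<Rightarrow> 'a relation set \<Rightarrow> 'a operation set" where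
  "Pol A Q = {f \<in> Op A. \<forall>R \<in> Q. preserves f R}"

definition End :: "'a set \<Rightarrow> 'a relation set \<Rightarrow> ('a \<Rightarrow> 'a) set" where
  "End A Q = {g \<in> maps A. \<forall>R \<in> Q. preserves_map g R}"

definition trl :: "'a set \<Rightarrow> 'a operation \<Rightarrow> ('a \<Rightarrow> 'a) set" where
  "trl A F = (case F of (n, f) \<Rightarrow>
     {restrict (\<lambda>x. f (as[i := x])) A | i as. i < n \<and> as \<in> tuples A n})"

definition trl_set :: "'a set \<Rightarrow> 'a operation set \<Rightarrow> ('a \<Rightarrow> 'a) set" where
  "trl_set A Fs = (\<Union>f \<in> Fs. trl A f)"

definition star :: "'a set \<Rightarrow> ('a \<Rightarrow> 'a) set \<Rightarrow> 'a operation set" where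
  "star A M = {f \<in> Op A. trl A f \<subseteq> M}"

definition gQuord :: "'a set \<Rightarrow> 'a relation set" where
  "gQuord A = {(m, \<rho>). 0 < m \<and> \<rho> \<subseteq> tuples A m
     \<and> (\<forall>a \<in> A. replicate m a \<in> \<rho>)
     \<and> (\<forall>M :: nat \<Rightarrow> nat \<Rightarrow> 'a.
          (\<forall>i<m. \<forall>j<m. M i j \<in> A)
          \<and> (\<forall>i<m. map (\<lambda>j. M i j) [0..<m] \<in> \<rho>)
          \<and> (\<forall>j<m. map (\<lambda>i. M i j) [0..<m] \<in> \<rho>)
          \<longrightarrow> map (\<lambda>i. M i i) [0..<m] \<in> \<rho>)}"

definition gQuord_ops :: "'a set \<Rightarrow> 'a operation set \<Rightarrow> 'a relation set" where
  "gQuord_ops A Fs = {R \<in> gQuord A. \<forall>f \<in> Fs. preserves f R}"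

definition gQuord_maps :: "'a set \<Rightarrow> ('a \<Rightarrow> 'a) set \<Rightarrow> 'a relation set" where
  "gQuord_maps A M = {R \<in> gQuord A. \<forall>g \<in> M. preserves_map g R}"

definition proj :: "'a set \<Rightarrow> nat \<Rightarrow> nat \<Rightarrow> 'a operation" where
  "proj A n i = (n, \<lambda>xs. if xs \<in> tuples A n then xs ! i else undefined)"

definition comp_op :: "'a set \<Rightarrow> 'a operation \<Rightarrow> nat \<Rightarrow> 'a operation list \<Rightarrow> 'a operation" where
  "comp_op A F k gs = (k, \<lambda>xs. if xs \<in> tuples A k
       then snd F (map (\<lambda>g. snd g xs) gs) else undefined)"

definition clone :: "'a set \<Rightarrow> 'a operation set \<Rightarrow> bool" where
  "clone A C = (C \<subseteq> Op A
     \<and> (\<forall>n i. 0 < n \<and> i < n \<longrightarrow> proj A n i \<in> C)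
     \<and> (\<forall>f \<in> C. \<forall>k gs. 0 < k \<and> length gs = fst f \<and> set gs \<subseteq> C \<and> (\<forall>g \<in> set gs. fst g = k)
           \<longrightarrow> comp_op A f k gs \<in> C))"

definition monoid_on :: "'a set \<Rightarrow> ('a \<Rightarrow> 'a) set \<Rightarrow> bool" where
  "monoid_on A N = (N \<subseteq> maps A \<and> restrict id A \<in> N
     \<and> (\<forall>f \<in> N. \<forall>g \<in> N. compose A f g \<in> N))"

definition u_closure :: "'a set \<Rightarrow> ('a \<Rightarrow> 'a) set \<Rightarrow> ('a \<Rightarrow> 'a) set" where
  "u_closure A M = \<Inter>{N. M \<subseteq> N \<and> monoid_on A N \<and> clone A (star A N)}"

definition u_closed :: "'a set \<Rightarrow> ('a \<Rightarrow> 'a) set \<Rightarrow> bool" where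
  "u_closed A M = (monoid_on A M \<and> u_closure A M = M)"

end

theory Submission
  imports Defs
begin

(*
  If f preserves the reflexive relation rho, so does each translation of f: fill the
  fixed places with constant tuples, which lie in rho by reflexivity.

  Conversely, let all translations of f preserve the generalized quasiorder rho and
  let r_0, ..., r_(n-1) be in rho. Substitute the entries of the r_l for the arguments
  of f one place at a time. If after k steps the tuple
  (f(r_0[j], ..., r_(k-1)[j], c_k, ..., c_(n-1)))_j lies in rho for every tail c, then
  the m x m matrix with entries f(r_0[j], ..., r_(k-1)[j], r_k[j'], c_(k+1), ...) has
  its rows in rho (a translation at place k applied to r_k) and its columns in rho
  (the induction hypothesis). By transitivity its diagonal lies in rho, and that is
  the tuple after k+1 steps.

  This gives (i) and Pol Q = (End Q)^*. So (End Q)^* is a clone, because Pol Q is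
  one, and any monoid M for which M^* is a clone is u-closed.
*)

definition relations_on :: "'a set \<Rightarrow> 'a relation set" where
  "relations_on A = {(m, \<rho>). \<rho> \<subseteq> tuples A m}"

lemma gQuord_subset_relations_on: "gQuord A \<subseteq> relations_on A"
  unfolding gQuord_def relations_on_def by auto

lemma relations_onD:
  assumes "(m, \<rho>) \<in> relations_on A" and "r \<in> \<rho>"
  shows "length r = m" and "set r \<subseteq> A"
  using assms unfolding relations_on_def tuples_def by auto

lemma relations_on_nth:
  "(m, \<rho>) \<in> relations_on A \<Longrightarrow> r \<in> \<rho> \<Longrightarrow> j < m \<Longrightarrow> r ! j \<in> A"
  using relations_onD by (metis nth_mem subsetD)

lemma column_in_tuples:
  assumes "(m, \<rho>) \<in> relations_on A" and "set rs \<subseteq> \<rho>" and "j < m"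
  shows "map (\<lambda>r. r ! j) rs \<in> tuples A (length rs)"
  using assms relations_on_nth unfolding tuples_def by fastforce

lemma gQuord_replicate: "(m, \<rho>) \<in> gQuord A \<Longrightarrow> a \<in> A \<Longrightarrow> replicate m a \<in> \<rho>"
  unfolding gQuord_def by auto

lemma gQuord_diagonal:
  assumes "(m, \<rho>) \<in> gQuord A"
    and "\<And>i j. i < m \<Longrightarrow> j < m \<Longrightarrow> M i j \<in> A"
    and "\<And>i. i < m \<Longrightarrow> map (\<lambda>j. M i j) [0..<m] \<in> \<rho>"
    and "\<And>j. j < m \<Longrightarrow> map (\<lambda>i. M i j) [0..<m] \<in> \<rho>"
  shows "map (\<lambda>i. M i i) [0..<m] \<in> \<rho>"
  using assms unfolding gQuord_def by auto

lemma tuples_update: "as \<in> tuples A n \<Longrightarrow> x \<in> A \<Longrightarrow> as[i := x] \<in> tuples A n"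
  unfolding tuples_def by (auto dest: set_update_subset_insert[THEN subsetD])

lemma Op_apply: "(n, f) \<in> Op A \<Longrightarrow> xs \<in> tuples A n \<Longrightarrow> f xs \<in> A"
  unfolding Op_def by auto

lemma translation_in_trl:
  "i < n \<Longrightarrow> as \<in> tuples A n \<Longrightarrow> restrict (\<lambda>x. f (as[i := x])) A \<in> trl A (n, f)"
  unfolding trl_def by auto

lemma trlE:
  assumes "g \<in> trl A (n, f)"
  obtains i as where "g = restrict (\<lambda>x. f (as[i := x])) A" and "i < n" and "as \<in> tuples A n"
  using assms unfolding trl_def by auto

lemma trl_subset_maps:
  assumes "F \<in> Op A" shows "trl A F \<subseteq> maps A"
proof (cases F)
  case (Pair n f)
  show ?thesis
    using assms unfolding Pair by (fastforce elim!: trlE intro: Op_apply tuples_update)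
qed

lemma map_translation:
  "set r \<subseteq> A \<Longrightarrow>
   map (restrict (\<lambda>x. f (as[i := x])) A) r = map (\<lambda>j. f (as[i := r ! j])) [0..<length r]"
  by (rule nth_equalityI) (auto simp: subset_iff)

lemma preserves_imp_translations_preserve:
  assumes R: "(m, \<rho>) \<in> gQuord A" and P: "preserves (n, f) (m, \<rho>)"
    and g: "g \<in> trl A (n, f)"
  shows "preserves_map g (m, \<rho>)"
proof -
  obtain i as where g_def: "g = restrict (\<lambda>x. f (as[i := x])) A"
    and i: "i < n" and as: "as \<in> tuples A n"
    using g by (rule trlE)
  show ?thesis
    unfolding preserves_map_def snd_conv
  proof
    fix r assume r: "r \<in> \<rho>"
    have r_len: "length r = m" and r_set: "set r \<subseteq> A"
      using relations_onD[OF _ r] R gQuord_subset_relations_on by blast+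
    define rs where "rs = (map (replicate m) as)[i := r]"
    have column: "map (\<lambda>s. s ! j) rs = as[i := r ! j]" if "j < m" for j
      using that unfolding rs_def by (simp add: map_update comp_def)
    have "set rs \<subseteq> insert r (replicate m ` set as)"
      unfolding rs_def using set_update_subset_insert by fastforce
    then have "set rs \<subseteq> \<rho>"
      using as r gQuord_replicate[OF R] unfolding tuples_def by auto
    moreover have "length rs = n"
      using as unfolding rs_def tuples_def by simp
    ultimately have "map (\<lambda>j. f (map (\<lambda>s. s ! j) rs)) [0..<m] \<in> \<rho>"
      using P unfolding preserves_def by simp
    moreover have "map (\<lambda>j. f (map (\<lambda>s. s ! j) rs)) [0..<m] = map g r"
      unfolding g_def map_translation[OF r_set] r_len by (simp add: column)
    ultimately show "map g r \<in> \<rho>"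
      by simp
  qed
qed

definition column_prefix :: "'a list list \<Rightarrow> nat \<Rightarrow> 'a list \<Rightarrow> nat \<Rightarrow> 'a list" where
  "column_prefix rs k c j = map (\<lambda>l. if l < k then rs ! l ! j else c ! l) [0..<length c]"

lemma column_prefix_0 [simp]: "column_prefix rs 0 c j = c"
  unfolding column_prefix_def by (rule nth_equalityI) auto

lemma column_prefix_full:
  "length rs = length c \<Longrightarrow> column_prefix rs (length c) c j = map (\<lambda>r. r ! j) rs"
  unfolding column_prefix_def by (rule nth_equalityI) auto

lemma column_prefix_update:
  "k < length c \<Longrightarrow> (column_prefix rs k c j)[k := x] = column_prefix rs k (c[k := x]) j"
  unfolding column_prefix_def by (rule nth_equalityI) (auto simp: nth_list_update)

lemma column_prefix_Suc:
  "k < length c \<Longrightarrow> column_prefix rs (Suc k) c j = column_prefix rs k (c[k := rs ! k ! j]) j"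
  unfolding column_prefix_def by (rule nth_equalityI) (auto simp: nth_list_update less_Suc_eq)

lemma column_prefix_in_tuples:
  assumes "(m, \<rho>) \<in> relations_on A" and "set rs \<subseteq> \<rho>" and "length rs = n" and "k \<le> n"
    and "c \<in> tuples A n" and "j < m"
  shows "column_prefix rs k c j \<in> tuples A n"
  using assms relations_on_nth[OF assms(1)] unfolding column_prefix_def tuples_def
  by (auto simp: subset_iff)

lemma translations_preserve_column_prefix:
  assumes R: "(m, \<rho>) \<in> gQuord A" and f: "(n, f) \<in> Op A"
    and T: "\<forall>g \<in> trl A (n, f). preserves_map g (m, \<rho>)"
    and rs: "length rs = n" "set rs \<subseteq> \<rho>"
  shows "k \<le> n \<Longrightarrow> c \<in> tuples A n \<Longrightarrow> map (\<lambda>j. f (column_prefix rs k c j)) [0..<m] \<in> \<rho>"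
proof (induction k arbitrary: c)
  case 0
  have "map (\<lambda>j. f (column_prefix rs 0 c j)) [0..<m] = replicate m (f c)"
    by (rule nth_equalityI) auto
  then show ?case
    using gQuord_replicate[OF R] Op_apply[OF f "0.prems"(2)] by simp
next
  case (Suc k)
  have R': "(m, \<rho>) \<in> relations_on A"
    using R gQuord_subset_relations_on by blast
  have k: "k < n" "k < length c"
    using Suc.prems unfolding tuples_def by auto
  have rs_k: "rs ! k \<in> \<rho>"
    using k rs by auto
  have entry: "rs ! k ! j \<in> A" if "j < m" for j
    using relations_on_nth[OF R' rs_k that] .
  have prefix: "column_prefix rs k c j \<in> tuples A n" if "j < m" for j
    using column_prefix_in_tuples[OF R' rs(2,1) _ Suc.prems(2) that] k by simp
  define M where "M j j' = f ((column_prefix rs k c j)[k := rs ! k ! j'])" for j j'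
  have "map (\<lambda>j. M j j) [0..<m] \<in> \<rho>"
  proof (rule gQuord_diagonal[where M = M, OF R])
    show "M j j' \<in> A" if "j < m" "j' < m" for j j'
      unfolding M_def using that by (intro Op_apply[OF f] tuples_update prefix entry)
    show "map (\<lambda>j'. M j j') [0..<m] \<in> \<rho>" if "j < m" for j
    proof -
      have "map (restrict (\<lambda>x. f ((column_prefix rs k c j)[k := x])) A) (rs ! k) \<in> \<rho>"
        using T translation_in_trl[OF k(1) prefix[OF that]] rs_k
        unfolding preserves_map_def by auto
      moreover have "length (rs ! k) = m" "set (rs ! k) \<subseteq> A"
        using relations_onD[OF R' rs_k] by auto
      ultimately show ?thesis
        unfolding M_def by (simp add: map_translation)
    qed
    show "map (\<lambda>j. M j j') [0..<m] \<in> \<rho>" if "j' < m" for j'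
      using Suc.IH[of "c[k := rs ! k ! j']"] Suc.prems entry[OF that] k
      unfolding M_def by (simp add: column_prefix_update tuples_update)
  qed
  then show ?case
    unfolding M_def using k by (simp add: column_prefix_update column_prefix_Suc)
qed

lemma translations_preserve_imp_preserves:
  assumes R: "(m, \<rho>) \<in> gQuord A" and f: "(n, f) \<in> Op A"
    and T: "\<forall>g \<in> trl A (n, f). preserves_map g (m, \<rho>)"
  shows "preserves (n, f) (m, \<rho>)"
  unfolding preserves_def prod.case
proof (intro allI impI)
  fix rs assume rs: "length rs = n \<and> set rs \<subseteq> \<rho>"
  have R': "(m, \<rho>) \<in> relations_on A"
    using R gQuord_subset_relations_on by blast
  have "0 < m"
    using R unfolding gQuord_def by auto
  then have "map (\<lambda>r. r ! 0) rs \<in> tuples A n"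
    using column_in_tuples[OF R'] rs by auto
  then have "map (\<lambda>j. f (column_prefix rs n (map (\<lambda>r. r ! 0) rs) j)) [0..<m] \<in> \<rho>"
    using translations_preserve_column_prefix[OF R f T] rs by auto
  then show "map (\<lambda>j. f (map (\<lambda>r. r ! j) rs)) [0..<m] \<in> \<rho>"
    using column_prefix_full[of rs "map (\<lambda>r. r ! 0) rs"] rs by simp
qed

lemma preserves_iff_translations_preserve:
  assumes "R \<in> gQuord A" and "F \<in> Op A"
  shows "preserves F R \<longleftrightarrow> (\<forall>g \<in> trl A F. preserves_map g R)"
proof -
  obtain m \<rho> n f where R: "R = (m, \<rho>)" and F: "F = (n, f)"
    by fastforce
  show ?thesis
    using assms preserves_imp_translations_preserve translations_preserve_imp_preserves
    unfolding R F by metis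
qed

lemma gQuord_ops_eq_gQuord_maps_trl_set:
  assumes "F \<subseteq> Op A"
  shows "gQuord_ops A F = gQuord_maps A (trl_set A F)"
proof -
  have "(\<forall>f \<in> F. preserves f R) \<longleftrightarrow> (\<forall>g \<in> trl_set A F. preserves_map g R)"
    if "R \<in> gQuord A" for R
    using that assms preserves_iff_translations_preserve unfolding trl_set_def by fast
  then show ?thesis
    unfolding gQuord_ops_def gQuord_maps_def by auto
qed

lemma Pol_eq_star_End:
  assumes "Q \<subseteq> gQuord A"
  shows "Pol A Q = star A (End A Q)"
proof -
  have "(\<forall>R \<in> Q. preserves F R) \<longleftrightarrow> trl A F \<subseteq> End A Q" if "F \<in> Op A" for F
    using that assms preserves_iff_translations_preserve trl_subset_maps[OF that]
    unfolding End_def by fast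
  then show ?thesis
    unfolding Pol_def star_def by auto
qed

lemma proj_in_Op: "i < n \<Longrightarrow> proj A n i \<in> Op A"
  unfolding proj_def Op_def tuples_def by auto

lemma proj_preserves:
  assumes R: "(m, \<rho>) \<in> relations_on A" and i: "i < n"
  shows "preserves (proj A n i) (m, \<rho>)"
  unfolding preserves_def proj_def prod.case
proof (intro allI impI)
  fix rs assume rs: "length rs = n \<and> set rs \<subseteq> \<rho>"
  then have rs_i: "rs ! i \<in> \<rho>"
    using i by auto
  have "map (\<lambda>j. if map (\<lambda>r. r ! j) rs \<in> tuples A n then map (\<lambda>r. r ! j) rs ! i else undefined)
      [0..<m] = rs ! i"
    using column_in_tuples[OF R] relations_onD(1)[OF R rs_i] rs i
    by (intro nth_equalityI) auto
  then show "map (\<lambda>j. if map (\<lambda>r. r ! j) rs \<in> tuples A n then map (\<lambda>r. r ! j) rs ! i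
      else undefined) [0..<m] \<in> \<rho>"
    using rs_i by simp
qed

lemma comp_op_in_Op:
  assumes f: "f \<in> Op A" and k: "0 < k" and gs: "length gs = fst f" "set gs \<subseteq> Op A"
    "\<forall>g \<in> set gs. fst g = k"
  shows "comp_op A f k gs \<in> Op A"
proof -
  have "snd g xs \<in> A" if "g \<in> set gs" "xs \<in> tuples A k" for g xs
    using gs that Op_apply[of k "snd g" A xs] by (metis prod.collapse subsetD)
  then have "map (\<lambda>g. snd g xs) gs \<in> tuples A (fst f)" if "xs \<in> tuples A k" for xs
    using gs(1) that unfolding tuples_def by auto
  then have "snd f (map (\<lambda>g. snd g xs) gs) \<in> A" if "xs \<in> tuples A k" for xs
    using f that Op_apply[of "fst f" "snd f" A] by simp
  then show ?thesis
    unfolding comp_op_def Op_def using k by auto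
qed

lemma comp_op_preserves:
  assumes R: "(m, \<rho>) \<in> relations_on A" and f: "preserves f (m, \<rho>)"
    and gs: "length gs = fst f" "\<forall>g \<in> set gs. fst g = k \<and> preserves g (m, \<rho>)"
  shows "preserves (comp_op A f k gs) (m, \<rho>)"
  unfolding preserves_def comp_op_def prod.case
proof (intro allI impI)
  fix rs assume rs: "length rs = k \<and> set rs \<subseteq> \<rho>"
  define col where "col j = map (\<lambda>r. r ! j) rs" for j
  define ss where "ss = map (\<lambda>g. map (\<lambda>j. snd g (col j)) [0..<m]) gs"
  have f_pres: "map (\<lambda>j. snd f (map (\<lambda>s. s ! j) ss')) [0..<m] \<in> \<rho>"
    if "length ss' = fst f" "set ss' \<subseteq> \<rho>" for ss'
    using f that unfolding preserves_def by (cases f) auto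
  have "set ss \<subseteq> \<rho>"
    using gs rs unfolding ss_def col_def preserves_def by (auto split: prod.splits)
  then have "map (\<lambda>j. snd f (map (\<lambda>s. s ! j) ss)) [0..<m] \<in> \<rho>"
    using gs(1) by (intro f_pres) (simp_all add: ss_def)
  moreover have "map (\<lambda>j. snd f (map (\<lambda>s. s ! j) ss)) [0..<m] =
      map (\<lambda>j. if col j \<in> tuples A k then snd f (map (\<lambda>g. snd g (col j)) gs) else undefined) [0..<m]"
    using column_in_tuples[OF R] rs unfolding ss_def col_def by (auto simp: comp_def)
  ultimately show "map (\<lambda>j. if map (\<lambda>r. r ! j) rs \<in> tuples A k
      then snd f (map (\<lambda>g. snd g (map (\<lambda>r. r ! j) rs)) gs) else undefined) [0..<m] \<in> \<rho>"
    unfolding col_def by simp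
qed

lemma clone_Pol:
  assumes Q: "Q \<subseteq> relations_on A"
  shows "clone A (Pol A Q)"
  unfolding clone_def
proof (intro conjI allI impI ballI)
  show "Pol A Q \<subseteq> Op A"
    unfolding Pol_def by auto
  show "proj A n i \<in> Pol A Q" if "0 < n \<and> i < n" for n i
    using that Q proj_in_Op proj_preserves unfolding Pol_def by fast
  fix f k gs
  assume f: "f \<in> Pol A Q"
    and gs: "0 < k \<and> length gs = fst f \<and> set gs \<subseteq> Pol A Q \<and> (\<forall>g \<in> set gs. fst g = k)"
  have "comp_op A f k gs \<in> Op A"
    using f gs by (intro comp_op_in_Op) (auto simp: Pol_def)
  moreover have "preserves (comp_op A f k gs) R" if "R \<in> Q" for R
  proof (cases R)
    case (Pair m \<rho>)
    show ?thesis
      using f gs that Q unfolding Pair Pol_def by (intro comp_op_preserves) auto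
  qed
  ultimately show "comp_op A f k gs \<in> Pol A Q"
    unfolding Pol_def by blast
qed

lemma monoid_on_End:
  assumes Q: "Q \<subseteq> relations_on A"
  shows "monoid_on A (End A Q)"
proof -
  have set_r: "set r \<subseteq> A" if "R \<in> Q" "r \<in> snd R" for R r
    using that Q relations_onD(2) by (metis prod.collapse subsetD)
  have "restrict id A \<in> End A Q"
    using set_r unfolding End_def preserves_map_def
    by (auto simp: subset_iff cong: map_cong)
  moreover have "compose A g h \<in> End A Q" if "g \<in> End A Q" "h \<in> End A Q" for g h
  proof -
    have "map (compose A g h) r = map g (map h r)" if "R \<in> Q" "r \<in> snd R" for R r
      using set_r[OF that] by (auto simp: compose_def subset_iff cong: map_cong)
    then show ?thesis
      using that unfolding End_def preserves_map_def
      by (auto simp: compose_def simp del: map_map)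
  qed
  ultimately show ?thesis
    unfolding monoid_on_def End_def by blast
qed

lemma u_closed_if_clone_star:
  assumes "monoid_on A M" and "clone A (star A M)"
  shows "u_closed A M"
  using assms unfolding u_closed_def u_closure_def by blast

theorem corollary3p8:
  fixes A :: "'a set" and F :: "'a operation set" and Q :: "'a relation set"
  assumes "finite A" and "A \<noteq> {}" and "F \<subseteq> Op A" and "Q \<subseteq> gQuord A"
  shows "gQuord_ops A F = gQuord_maps A (trl_set A F)
         \<and> Pol A Q = star A (End A Q)
         \<and> clone A (star A (End A Q))
         \<and> u_closed A (End A Q)"
proof -
  have Q: "Q \<subseteq> relations_on A"
    using assms(4) gQuord_subset_relations_on by blast
  have "clone A (star A (End A Q))"
    using clone_Pol[OF Q] Pol_eq_star_End[OF assms(4)] by simp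
  then show ?thesis
    using gQuord_ops_eq_gQuord_maps_trl_set[OF assms(3)] Pol_eq_star_End[OF assms(4)]
      u_closed_if_clone_star[OF monoid_on_End[OF Q]] by blast
qed

end
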